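(* Let $G$ be a finite directed graph and $R\subseteq V(G)$, and consider the maximal faces of $\mathrm{DT}_R(G)$ (all of which are directed forests with root set $R$). Call a vertex $v$ "left" if, in every maximal face of $\mathrm{DT}_R(G)$, the tree containing $v$ has the same root $r$ and the directed path from $r$ to $v$ is the same; call all other vertices "right". Then every edge $(x\rightarrow y)$ lying in some maximal face of $\mathrm{DT}_R(G)$ whose endpoints are on different sides (one left, one right) is nice in $\mathrm{DT}_R(G)$.
   Context: A directed forest in $G$ is a set of edges of $G$ which, viewed as a graph on $V(G)$, is acyclic and has at most one edge directed to each vertex; equivalently a disjoint union of directed trees with all edges oriented away from the root. Its roots are the vertices with no forest edge directed to them. $\mathrm{DT}(G)$ is the simplicial complex with vertex set $E(G)$ whose simplices are the directed forests; $\mathrm{DT}_R(G)$ is the subcomplex generated by the directed forests with root set exactly $R$. An edge $(x\rightarrow y)$ of $G$ is nice in a subcomplex $\Delta$ of $\mathrm{DT}(G)$ if (i) there is an edge $(z\rightarrow y)$ in $\Delta$ with $z\ne x$, and (ii) every forest $F\in\Delta$ without an edge directed to $y$ satisfies $F\cup\{(x\rightarrow y)\}\in\Delta$. *)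

theory Defs
  imports Main
begin

text \<open>A finite directed graph is given by a finite vertex set V and an edge set
  E \<subseteq> V \<times> V of ordered pairs (x, y), meaning the edge x \<rightarrow> y.\<close>

definition dforest :: "('a \<times> 'a) set \<Rightarrow> ('a \<times> 'a) set \<Rightarrow> bool" where
  "dforest E F \<longleftrightarrow> F \<subseteq> E \<and> acyclic F \<and>
     (\<forall>x z y. (x, y) \<in> F \<longrightarrow> (z, y) \<in> F \<longrightarrow> x = z)"

definition roots :: "'a set \<Rightarrow> ('a \<times> 'a) set \<Rightarrow> 'a set" where
  "roots V F = {v \<in> V. \<forall>u. (u, v) \<notin> F}"

definition DT_R :: "'a set \<Rightarrow> ('a \<times> 'a) set \<Rightarrow> 'a set \<Rightarrow> ('a \<times> 'a) set set" where
  "DT_R V E R = {F. \<exists>T. F \<subseteq> T \<and> dforest E T \<and> roots V T = R}"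

definition facets :: "'b set set \<Rightarrow> 'b set set" where
  "facets \<Delta> = {F \<in> \<Delta>. \<forall>F' \<in> \<Delta>. F \<subseteq> F' \<longrightarrow> F' = F}"

definition tree_root :: "'a set \<Rightarrow> ('a \<times> 'a) set \<Rightarrow> 'a \<Rightarrow> 'a" where
  "tree_root V F v = (THE r. r \<in> roots V F \<and> (r, v) \<in> F\<^sup>*)"

definition root_path :: "('a \<times> 'a) set \<Rightarrow> 'a \<Rightarrow> ('a \<times> 'a) set" where
  "root_path F v = {(a, b) \<in> F. (b, v) \<in> F\<^sup>*}"

definition left_vertex :: "'a set \<Rightarrow> ('a \<times> 'a) set \<Rightarrow> 'a set \<Rightarrow> 'a \<Rightarrow> bool" where
  "left_vertex V E R v \<longleftrightarrow> (\<exists>r P. \<forall>F \<in> facets (DT_R V E R).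
      tree_root V F v = r \<and> root_path F v = P)"

definition nice :: "('a \<times> 'a) set set \<Rightarrow> 'a \<Rightarrow> 'a \<Rightarrow> bool" where
  "nice \<Delta> x y \<longleftrightarrow>
     (\<exists>z. z \<noteq> x \<and> {(z, y)} \<in> \<Delta>) \<and>
     (\<forall>F \<in> \<Delta>. (\<forall>z. (z, y) \<notin> F) \<longrightarrow> insert (x, y) F \<in> \<Delta>)"

end

theory Submission
  imports Defs
begin

text \<open>If y is left, then so is its parent x in a facet containing (x, y): every facet
  contains the last edge (x, y) of the common root path of y, so x has the same root and
  that path minus (x, y). Hence x is left and y is right.
  Condition (i): y is not a root, so if x were the only possible parent of y, every facet
  would contain (x, y), and y would inherit the root and root path of x, making y left.
  Condition (ii): extend F to a facet T and replace the edge into y by (x, y). No cycle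
  arises: a path from y to x in T would put the edge into y on the root path of x, which
  is the same in every facet, in particular in one containing (x, y).\<close>

lemma dforest_subset: "dforest E T \<Longrightarrow> T \<subseteq> E"
  unfolding dforest_def by simp

lemma dforest_acyclic: "dforest E T \<Longrightarrow> acyclic T"
  unfolding dforest_def by simp

lemma dforest_parent_unique: "dforest E T \<Longrightarrow> (a, b) \<in> T \<Longrightarrow> (c, b) \<in> T \<Longrightarrow> a = c"
  unfolding dforest_def by metis

lemma acyclic_edge_not_rtrancl: "acyclic T \<Longrightarrow> (x, y) \<in> T \<Longrightarrow> (y, x) \<notin> T\<^sup>*"
  by (metis acyclic_insert insert_absorb)

lemma dforest_rtrancl_edge_iff:
  assumes "dforest E T" "(x, y) \<in> T"
  shows "(b, y) \<in> T\<^sup>* \<longleftrightarrow> b = y \<or> (b, x) \<in> T\<^sup>*"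
proof
  assume "(b, y) \<in> T\<^sup>*"
  then show "b = y \<or> (b, x) \<in> T\<^sup>*"
  proof (cases rule: rtranclE)
    case (step c)
    then have "c = x" using dforest_parent_unique[OF assms(1) _ assms(2)] by blast
    then show ?thesis using step by simp
  qed simp
next
  assume "b = y \<or> (b, x) \<in> T\<^sup>*"
  then show "(b, y) \<in> T\<^sup>*" using assms(2) by (auto intro: rtrancl_into_rtrancl)
qed

lemma tree_root_edge:
  assumes "dforest E T" "(x, y) \<in> T"
  shows "tree_root V T y = tree_root V T x"
proof -
  have "r \<noteq> y" if "r \<in> roots V T" for r
    using that assms(2) unfolding roots_def by blast
  then have "(\<lambda>r. r \<in> roots V T \<and> (r, y) \<in> T\<^sup>*) = (\<lambda>r. r \<in> roots V T \<and> (r, x) \<in> T\<^sup>*)"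
    using dforest_rtrancl_edge_iff[OF assms] by blast
  then show ?thesis unfolding tree_root_def by simp
qed

lemma root_path_edge:
  assumes "dforest E T" "(x, y) \<in> T"
  shows "root_path T y = insert (x, y) (root_path T x)"
proof -
  have "root_path T y = {(a, b) \<in> T. b = y} \<union> root_path T x"
    unfolding root_path_def using dforest_rtrancl_edge_iff[OF assms] by blast
  also have "{(a, b) \<in> T. b = y} = {(x, y)}"
    using dforest_parent_unique[OF assms(1) _ assms(2)] assms(2) by blast
  finally show ?thesis by simp
qed

lemma edge_notin_root_path: "acyclic T \<Longrightarrow> (x, y) \<in> T \<Longrightarrow> (x, y) \<notin> root_path T x"
  unfolding root_path_def using acyclic_edge_not_rtrancl[of T x y] by simp

lemma dforest_same_roots_subset_eq:
  assumes "E \<subseteq> V \<times> V" "dforest E T" "dforest E T'" "roots V T' = roots V T" "T \<subseteq> T'"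
  shows "T' = T"
proof -
  have "(a, b) \<in> T" if ab: "(a, b) \<in> T'" for a b
  proof -
    have "b \<in> V" using ab dforest_subset[OF assms(3)] assms(1) by blast
    moreover have "b \<notin> roots V T" using ab assms(4)[symmetric] unfolding roots_def by blast
    ultimately obtain c where cb: "(c, b) \<in> T" unfolding roots_def by blast
    then have "c = a" using ab assms(5) dforest_parent_unique[OF assms(3)] by blast
    then show ?thesis using cb by simp
  qed
  then show ?thesis using assms(5) by fast
qed

lemma facet_DT_R_dforest:
  assumes "F \<in> facets (DT_R V E R)"
  shows "dforest E F" and "roots V F = R"
proof -
  obtain T where T: "F \<subseteq> T" "dforest E T" "roots V T = R"
    using assms unfolding facets_def DT_R_def by blast
  then have "T \<in> DT_R V E R" unfolding DT_R_def by blast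
  then have "T = F" using assms T(1) unfolding facets_def by blast
  then show "dforest E F" "roots V F = R" using T by simp_all
qed

lemma dforest_facet_DT_R:
  assumes "E \<subseteq> V \<times> V" "dforest E T" "roots V T = R"
  shows "T \<in> facets (DT_R V E R)"
proof -
  have "F = T" if F: "F \<in> DT_R V E R" and TF: "T \<subseteq> F" for F
  proof -
    obtain T' where T': "F \<subseteq> T'" "dforest E T'" "roots V T' = R"
      using F unfolding DT_R_def by blast
    then have "T' = T"
      using dforest_same_roots_subset_eq[OF assms(1,2)] assms(3) TF by blast
    then show ?thesis using TF T'(1) by blast
  qed
  moreover have "T \<in> DT_R V E R" using assms unfolding DT_R_def by blast
  ultimately show ?thesis unfolding facets_def by blast
qed

lemma left_vertex_parent:
  assumes "left_vertex V E R y" "F0 \<in> facets (DT_R V E R)" "(x, y) \<in> F0"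
  shows "left_vertex V E R x"
proof -
  obtain r P where rP: "\<forall>F \<in> facets (DT_R V E R). tree_root V F y = r \<and> root_path F y = P"
    using assms(1) unfolding left_vertex_def by blast
  have "(x, y) \<in> root_path F0 y" using assms(3) by (simp add: root_path_def)
  then have "(x, y) \<in> P" using rP assms(2) by blast
  have "tree_root V F x = r \<and> root_path F x = P - {(x, y)}"
    if F: "F \<in> facets (DT_R V E R)" for F
  proof -
    have "(x, y) \<in> root_path F y" using \<open>(x, y) \<in> P\<close> rP F by blast
    then have xy: "(x, y) \<in> F" by (simp add: root_path_def)
    note Ff = facet_DT_R_dforest(1)[OF F]
    have "root_path F x = root_path F y - {(x, y)}"
      using root_path_edge[OF Ff xy] edge_notin_root_path[OF dforest_acyclic[OF Ff] xy] by simp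
    then show ?thesis using tree_root_edge[OF Ff xy, where V = V] rP F by simp
  qed
  then show ?thesis unfolding left_vertex_def by (intro exI[of _ r] exI[of _ "P - {(x, y)}"]) blast
qed

lemma left_vertex_child:
  assumes "left_vertex V E R x" "\<forall>F \<in> facets (DT_R V E R). (x, y) \<in> F"
  shows "left_vertex V E R y"
proof -
  obtain r P where rP: "\<forall>F \<in> facets (DT_R V E R). tree_root V F x = r \<and> root_path F x = P"
    using assms(1) unfolding left_vertex_def by blast
  have "tree_root V F y = r \<and> root_path F y = insert (x, y) P"
    if F: "F \<in> facets (DT_R V E R)" for F
    using tree_root_edge root_path_edge facet_DT_R_dforest(1)[OF F] assms(2) rP F by metis
  then show ?thesis unfolding left_vertex_def by (intro exI[of _ r] exI[of _ "insert (x, y) P"]) blast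
qed

lemma facet_contains_forced_parent_edge:
  assumes "y \<in> V" "y \<notin> R" "\<forall>z. {(z, y)} \<in> DT_R V E R \<longrightarrow> z = x"
    and F: "F \<in> facets (DT_R V E R)"
  shows "(x, y) \<in> F"
proof -
  note Ff = facet_DT_R_dforest[OF F]
  obtain z where z: "(z, y) \<in> F" using assms(1,2) Ff(2) unfolding roots_def by blast
  then have "{(z, y)} \<in> DT_R V E R" using Ff unfolding DT_R_def by blast
  then show ?thesis using z assms(3) by blast
qed

lemma left_right_exists_other_parent:
  assumes "left_vertex V E R x" "\<not> left_vertex V E R y" "y \<in> V" "y \<notin> R"
  shows "\<exists>z. z \<noteq> x \<and> {(z, y)} \<in> DT_R V E R"
  using left_vertex_child[OF assms(1)] facet_contains_forced_parent_edge[OF assms(3,4)] assms(2)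
  by blast

lemma left_vertex_not_descendant:
  assumes "left_vertex V E R x" "F0 \<in> facets (DT_R V E R)" "(x, y) \<in> F0"
    and "T \<in> facets (DT_R V E R)" "(w, y) \<in> T"
  shows "(y, x) \<notin> T\<^sup>*"
proof
  assume "(y, x) \<in> T\<^sup>*"
  with assms(5) have "(w, y) \<in> root_path T x" by (simp add: root_path_def)
  moreover obtain r P where "\<forall>F \<in> facets (DT_R V E R). tree_root V F x = r \<and> root_path F x = P"
    using assms(1) unfolding left_vertex_def by blast
  then have "root_path T x = root_path F0 x" using assms(2,4) by simp
  ultimately have "(w, y) \<in> root_path F0 x" by simp
  then have "(y, x) \<in> F0\<^sup>*" by (simp add: root_path_def)
  with acyclic_edge_not_rtrancl[OF dforest_acyclic[OF facet_DT_R_dforest(1)[OF assms(2)]] assms(3)]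
  show False by simp
qed

lemma dforest_exchange_parent:
  assumes "dforest E T" "(w, y) \<in> T" "(x, y) \<in> E" "(y, x) \<notin> T\<^sup>*"
  shows "dforest E (insert (x, y) (T - {(w, y)}))" (is "dforest E ?T'")
proof -
  have "(y, x) \<notin> (T - {(w, y)})\<^sup>*" using assms(4) rtrancl_mono[of "T - {(w, y)}" T] by blast
  moreover have "acyclic (T - {(w, y)})"
    using dforest_acyclic[OF assms(1)] acyclic_subset by blast
  ultimately have "acyclic ?T'" by (simp add: acyclic_insert)
  moreover have "?T' \<subseteq> E" using dforest_subset[OF assms(1)] assms(3) by blast
  moreover have "a = c" if "(a, b) \<in> ?T'" "(c, b) \<in> ?T'" for a b c
  proof (cases "b = y")
    case True
    then show ?thesis using that dforest_parent_unique[OF assms(1) _ assms(2)] by auto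
  next
    case False
    then show ?thesis using that dforest_parent_unique[OF assms(1)] by auto
  qed
  ultimately show ?thesis unfolding dforest_def by blast
qed

lemma roots_exchange_parent:
  "(w, y) \<in> T \<Longrightarrow> roots V (insert (x, y) (T - {(w, y)})) = roots V T"
  unfolding roots_def by auto

lemma DT_R_insert_left_parent:
  assumes "E \<subseteq> V \<times> V" "left_vertex V E R x" "F0 \<in> facets (DT_R V E R)" "(x, y) \<in> F0"
    and "F \<in> DT_R V E R" "\<forall>z. (z, y) \<notin> F"
  shows "insert (x, y) F \<in> DT_R V E R"
proof -
  obtain T where T: "F \<subseteq> T" "dforest E T" "roots V T = R"
    using assms(5) unfolding DT_R_def by blast
  note F0f = facet_DT_R_dforest[OF assms(3)]
  have xyE: "(x, y) \<in> E" using dforest_subset[OF F0f(1)] assms(4) by blast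
  then have "y \<in> V" using assms(1) by blast
  moreover have "y \<notin> R" using assms(4) F0f(2) unfolding roots_def by blast
  ultimately obtain w where w: "(w, y) \<in> T" using T(3) unfolding roots_def by blast
  have "(y, x) \<notin> T\<^sup>*"
    using left_vertex_not_descendant[OF assms(2-4) dforest_facet_DT_R[OF assms(1) T(2,3)] w] .
  then have "dforest E (insert (x, y) (T - {(w, y)}))"
    using dforest_exchange_parent[OF T(2) w xyE] by blast
  moreover have "roots V (insert (x, y) (T - {(w, y)})) = R"
    using roots_exchange_parent[OF w] T(3) by simp
  moreover have "insert (x, y) F \<subseteq> insert (x, y) (T - {(w, y)})"
    using T(1) assms(6) by blast
  ultimately show ?thesis unfolding DT_R_def by blast
qed

theorem proposition2p5:
  fixes V :: "'a set" and E :: "('a \<times> 'a) set" and R :: "'a set" and x y :: 'a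
  assumes "finite V" and "E \<subseteq> V \<times> V" and "R \<subseteq> V"
    and "\<exists>F \<in> facets (DT_R V E R). (x, y) \<in> F"
    and "left_vertex V E R x \<noteq> left_vertex V E R y"
  shows "nice (DT_R V E R) x y"
proof -
  obtain F0 where F0: "F0 \<in> facets (DT_R V E R)" "(x, y) \<in> F0" using assms(4) by blast
  note F0f = facet_DT_R_dforest[OF F0(1)]
  have yV: "y \<in> V" using F0(2) dforest_subset[OF F0f(1)] assms(2) by blast
  have yR: "y \<notin> R" using F0(2) F0f(2) unfolding roots_def by blast
  have x_left: "left_vertex V E R x" and y_right: "\<not> left_vertex V E R y"
    using left_vertex_parent[OF _ F0] assms(5) by blast+
  show ?thesis
    unfolding nice_def
    using left_right_exists_other_parent[OF x_left y_right yV yR]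
      DT_R_insert_left_parent[OF assms(2) x_left F0] by blast
qed

end
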